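(* Let $\mathcal C$ be a $\mathbb Z_2$-graded unital (filtered) $A_\infty$-category over $\Lambda$ with finitely many objects $L_1,\dots,L_k$ (e.g. a finite collection of Lagrangian immersions in a Kähler manifold), each morphism space $\mathcal C(L_i,L_j)$ free of finite rank with a chosen basis, the basis of $\mathcal C(L_i,L_i)$ containing the unit $\mathbf 1_{L_i}$. Let $\{X_e\}_{e\in E}$ be a chosen set of odd-degree basis elements, and let $Q$ be the quiver with vertices $v_1,\dots,v_k$ and one arrow $x_e$ from $v_i$ to $v_j$ for each $X_e\in\mathcal C(L_i,L_j)$. Let $\Lambda Q$ be the completed path algebra and consider $\Lambda Q\widehat\otimes_{\Lambda^\oplus}\bigoplus_{i,j}\mathcal C(L_i,L_j)$, in which $p\otimes X$ with $X\in\mathcal C(L_i,L_j)$ is nonzero only if the path $p$ starts at $v_i$, with operations $m_k(p_1X_1,\dots,p_kX_k)=p_k\cdots p_1\,m_k(X_1,\dots,X_k)$. Let $b=\sum_{e\in E}x_eX_e$ and write $$m_0^b=\sum_{n\ge0}m_n(b,\dots,b)=\sum_{i=1}^kW_i\,\mathbf 1_{L_i}+\sum_f P_f\,X_f,$$ where $X_f$ runs over the even-degree basis elements other than the units. Let $R$ be the completed two-sided ideal generated by the $P_f$, $\mathcal A=\Lambda Q/R$ and $W=\sum_iW_i\in\mathcal A$. Then $W$ is a central element of $\mathcal A$.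
   Context: Path algebra conventions: a path $a_{m-1}\cdots a_1a_0$ is written from right to left, with the head of $a_i$ equal to the tail of $a_{i+1}$; concatenation of non-composable paths is $0$; each vertex $v_i$ gives a trivial path (idempotent) $\pi_i$, and $\Lambda^\oplus=\Lambda\pi_1\oplus\dots\oplus\Lambda\pi_k$ with $\pi_i\pi_j=\delta_{ij}\pi_i$; $\Lambda Q$ is completed with respect to the energy filtration of coefficients. The $A_\infty$-operations $m_n$ on composable morphisms have degree one in the shifted grading $|v|'=|v|-1$ and satisfy the $A_\infty$-equations with sign $(-1)^{\sum_{j<i}|v_j|'}$. Unitality: $m_2(\mathbf 1_{L_i},v)=v$, $(-1)^{|w|}m_2(w,\mathbf 1_{L_i})=w$ whenever defined, and $m_n(\dots,\mathbf 1_{L_i},\dots)=0$ for $n\ne2$. The variables $x_e$ have degree $0$. *)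

theory Defs
  imports Complex_Main
begin

(* Objects L_i are the elements of a finite type 'o; the union of the chosen bases of all
   morphism spaces C(L_i,L_j) is a finite type 'b, a basis element X lying in
   C(L_(src X), L_(tgt X)).  The Z2-degree of X is given by deg_odd X (True = odd degree).
   An A-infinity operation m_n(X_1,...,X_n) on composable basis elements
   X_1 in C(L_(i0),L_(i1)), X_2 in C(L_(i1),L_(i2)), ... is encoded by its coefficients:
   mop i0 [X_1,...,X_n] Z = coefficient of the basis element Z in m_n(X_1,...,X_n)
   (the object i0 is needed for m_0). *)

fun chain :: "('b \<Rightarrow> 'o) \<Rightarrow> ('b \<Rightarrow> 'o) \<Rightarrow> 'o \<Rightarrow> 'b list \<Rightarrow> bool" where
  "chain s t i [] = True"
| "chain s t i (x # xs) = (s x = i \<and> chain s t (t x) xs)"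

fun endpt :: "('b \<Rightarrow> 'o) \<Rightarrow> 'o \<Rightarrow> 'b list \<Rightarrow> 'o" where
  "endpt t i [] = i"
| "endpt t i (x # xs) = endpt t (t x) xs"

(* number of inputs of even degree; |X|' = |X| - 1, so (-1)^(sum of shifted degrees)
   equals (-1)^(number of even-degree entries) *)
definition n_even :: "('b \<Rightarrow> bool) \<Rightarrow> 'b list \<Rightarrow> nat" where
  "n_even deg_odd xs = length (filter (\<lambda>x. \<not> deg_odd x) xs)"

definition energy_val :: "('r::comm_ring_1 \<Rightarrow> real) \<Rightarrow> bool" where
  "energy_val val \<longleftrightarrow>
     val 1 = 0 \<and>
     (\<forall>a. val (- a) = val a) \<and>
     (\<forall>a b. a \<noteq> 0 \<longrightarrow> b \<noteq> 0 \<longrightarrow> a + b \<noteq> 0 \<longrightarrow> val (a + b) \<ge> min (val a) (val b)) \<and>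
     (\<forall>a b. a * b \<noteq> 0 \<longrightarrow> val (a * b) \<ge> val a + val b)"

definition unital_Ainf ::
  "('b \<Rightarrow> 'o) \<Rightarrow> ('b \<Rightarrow> 'o) \<Rightarrow> ('b \<Rightarrow> bool) \<Rightarrow> ('o \<Rightarrow> 'b)
   \<Rightarrow> ('o \<Rightarrow> 'b list \<Rightarrow> 'b \<Rightarrow> 'r::comm_ring_1) \<Rightarrow> bool" where
  "unital_Ainf s t deg_odd unit mop \<longleftrightarrow>
     \<comment> \<open>m_n is defined on composable inputs, with output in C(L_i0, L_in)\<close>
     (\<forall>i xs z. mop i xs z \<noteq> 0 \<longrightarrow>
          chain s t i xs \<and> s z = i \<and> t z = endpt t i xs) \<and>
     \<comment> \<open>m_n has degree one in the shifted grading\<close>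
     (\<forall>i xs z. mop i xs z \<noteq> 0 \<longrightarrow> (deg_odd z \<longleftrightarrow> odd (n_even deg_odd xs))) \<and>
     \<comment> \<open>A-infinity equations\<close>
     (\<forall>i xs z. chain s t i xs \<longrightarrow>
        (\<Sum>k1\<le>length xs. \<Sum>k2\<le>length xs - k1. \<Sum>y\<in>UNIV.
            (- 1) ^ n_even deg_odd (take k1 xs)
            * mop (endpt t i (take k1 xs)) (take k2 (drop k1 xs)) y
            * mop i (take k1 xs @ [y] @ drop (k1 + k2) xs) z) = 0) \<and>
     \<comment> \<open>units: 1_(L_i) is an even basis element of C(L_i,L_i)\<close>
     (\<forall>i. s (unit i) = i \<and> t (unit i) = i \<and> \<not> deg_odd (unit i)) \<and>
     (\<forall>x z. mop (s x) [unit (s x), x] z = (if z = x then 1 else 0)) \<and>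
     (\<forall>x z. (- 1) ^ (if deg_odd x then 1 else 0) * mop (s x) [x, unit (t x)] z
              = (if z = x then 1 else 0)) \<and>
     (\<forall>i xs z. length xs \<noteq> 2 \<longrightarrow> (\<exists>j. unit j \<in> set xs) \<longrightarrow> mop i xs z = 0)"

(* This makes m_0^b and all m(b,...,b,y,b,...,b)
   converge in the energy-completed path algebra. *)
definition energy_convergent ::
  "('b \<Rightarrow> 'o) \<Rightarrow> ('b \<Rightarrow> 'o) \<Rightarrow> 'b set \<Rightarrow> ('r::comm_ring_1 \<Rightarrow> real)
   \<Rightarrow> ('o \<Rightarrow> 'b list \<Rightarrow> 'b \<Rightarrow> 'r) \<Rightarrow> bool" where
  "energy_convergent s t E val mop \<longleftrightarrow>
     (\<forall>c. finite {(i, xs). chain s t i xs \<and> length (filter (\<lambda>x. x \<notin> E) xs) \<le> 1 \<and>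
                         (\<exists>z. mop i xs z \<noteq> 0 \<and> val (mop i xs z) < c)})"

(* Paths in the quiver Q: a path is (v_i, [e_1,...,e_n]) = x_(e_n) ... x_(e_1)
   starting at v_i; an arrow x_e goes from v_(src e) to v_(tgt e).
   Elements of the completed path algebra Lambda Q: coefficient functions on paths
   with energy going to infinity. *)
definition cpa :: "('b \<Rightarrow> 'o) \<Rightarrow> ('b \<Rightarrow> 'o) \<Rightarrow> 'b set \<Rightarrow> ('r::comm_ring_1 \<Rightarrow> real)
                    \<Rightarrow> ('o \<times> 'b list \<Rightarrow> 'r) set" where
  "cpa s t E val = {f. (\<forall>i es. f (i, es) \<noteq> 0 \<longrightarrow> chain s t i es \<and> set es \<subseteq> E) \<and>
                        (\<forall>c. finite {p. f p \<noteq> 0 \<and> val (f p) < c})}"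

(* product in the path algebra: (f g) = sum f_p g_q (p q), q traversed first *)
definition pmul :: "('b \<Rightarrow> 'o) \<Rightarrow> ('o \<times> 'b list \<Rightarrow> 'r::comm_ring_1)
                     \<Rightarrow> ('o \<times> 'b list \<Rightarrow> 'r) \<Rightarrow> ('o \<times> 'b list \<Rightarrow> 'r)" where
  "pmul t f g = (\<lambda>(i, es). \<Sum>k\<le>length es. f (endpt t i (take k es), drop k es) * g (i, take k es))"

definition alg_ideal :: "('b \<Rightarrow> 'o) \<Rightarrow> ('o \<times> 'b list \<Rightarrow> 'r::comm_ring_1) set
                         \<Rightarrow> ('o \<times> 'b list \<Rightarrow> 'r) set \<Rightarrow> ('o \<times> 'b list \<Rightarrow> 'r) set" where
  "alg_ideal t A G = {h. \<exists>n a g c. (\<forall>l<n. a l \<in> A \<and> g l \<in> G \<and> c l \<in> A) \<and>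
                        h = (\<lambda>p. \<Sum>l<(n::nat). pmul t (pmul t (a l) (g l)) (c l) p)}"

definition eclosure :: "('r::comm_ring_1 \<Rightarrow> real) \<Rightarrow> ('p \<Rightarrow> 'r) set \<Rightarrow> ('p \<Rightarrow> 'r) set" where
  "eclosure val S = {f. \<forall>c. \<exists>g\<in>S. \<forall>p. f p \<noteq> g p \<longrightarrow> val (f p - g p) \<ge> c}"

(* coefficient of the basis element Z in m_0^b = sum_n m_n(b,...,b), b = sum_e x_e X_e *)
definition m0b :: "('b \<Rightarrow> 'o) \<Rightarrow> ('b \<Rightarrow> 'o) \<Rightarrow> 'b set
                   \<Rightarrow> ('o \<Rightarrow> 'b list \<Rightarrow> 'b \<Rightarrow> 'r::comm_ring_1) \<Rightarrow> 'b \<Rightarrow> ('o \<times> 'b list \<Rightarrow> 'r)" where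
  "m0b s t E mop z = (\<lambda>(i, es). if chain s t i es \<and> set es \<subseteq> E then mop i es z else 0)"

definition Wpot :: "('b \<Rightarrow> 'o) \<Rightarrow> ('b \<Rightarrow> 'o) \<Rightarrow> 'b set \<Rightarrow> ('o::finite \<Rightarrow> 'b)
                    \<Rightarrow> ('o \<Rightarrow> 'b list \<Rightarrow> 'b \<Rightarrow> 'r::comm_ring_1) \<Rightarrow> ('o \<times> 'b list \<Rightarrow> 'r)" where
  "Wpot s t E unit mop = (\<lambda>p. \<Sum>j\<in>UNIV. m0b s t E mop (unit j) p)"

definition Rideal :: "('b \<Rightarrow> 'o) \<Rightarrow> ('b \<Rightarrow> 'o) \<Rightarrow> ('b \<Rightarrow> bool) \<Rightarrow> ('o \<Rightarrow> 'b) \<Rightarrow> 'b set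
                     \<Rightarrow> ('r::comm_ring_1 \<Rightarrow> real) \<Rightarrow> ('o \<Rightarrow> 'b list \<Rightarrow> 'b \<Rightarrow> 'r)
                     \<Rightarrow> ('o \<times> 'b list \<Rightarrow> 'r) set" where
  "Rideal s t deg_odd unit E val mop =
     cpa s t E val \<inter>
     eclosure val (alg_ideal t (cpa s t E val)
        {m0b s t E mop f | f. \<not> deg_odd f \<and> f \<notin> range unit})"

end

theory Submission
  imports Defs
begin

text \<open>For a path u of arrows in E, the coefficient of x_u in
  the A-infinity relation sum m(b,..,b, m(b,..,b), b,..,b) = 0 carries no signs, because all X_e
  are odd. Expand the inner output in the basis: odd outputs cannot occur, the units only enter
  through m_2(1, X) and m_2(X, 1), which yields the coefficient of x_u in the commutator of W with
  the arrows, and the even non-units yield terms a P_f c. Hence for every g in the path algebra the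
  commutator W g - g W is an energy-convergent sum of elements a P_f c; truncating this sum at any
  energy level gives an element of the algebraic ideal generated by the P_f that agrees with the
  commutator up to that energy, so the commutator lies in the completed ideal R.\<close>

section \<open>Splittings of lists\<close>

definition splits :: "'a list \<Rightarrow> ('a list \<times> 'a list) set" where
  "splits L = {(a, b). a @ b = L}"

definition splits3 :: "'a list \<Rightarrow> ('a list \<times> 'a list \<times> 'a list) set" where
  "splits3 L = {(a, b, c). a @ b @ c = L}"

definition splits5 :: "'a list \<Rightarrow> ('a list \<times> 'a list \<times> 'a list \<times> 'a list \<times> 'a list) set" where
  "splits5 L = {(a, b, c, d, e). a @ b @ c @ d @ e = L}"

definition infixes :: "'a list \<Rightarrow> 'a list set" where
  "infixes L = {x. \<exists>a b. a @ x @ b = L}"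

lemma finite_infixes: "finite (infixes L)"
proof (rule finite_subset)
  show "infixes L \<subseteq> {xs. set xs \<subseteq> set L \<and> length xs \<le> length L}"
    unfolding infixes_def by auto
qed (rule finite_lists_length_le, simp)

lemma prefix_in_infixes: "a \<in> infixes (a @ b @ c)"
  unfolding infixes_def by (intro CollectI exI[of _ "[]"] exI[of _ "b @ c"]) simp

lemma suffix_in_infixes: "c \<in> infixes (a @ b @ c)"
  unfolding infixes_def by (intro CollectI exI[of _ "a @ b"] exI[of _ "[]"]) simp

lemma finite_splits: "finite (splits L)"
proof (rule finite_subset)
  show "splits L \<subseteq> infixes L \<times> infixes L"
    unfolding splits_def infixes_def by force
qed (simp add: finite_infixes)

lemma finite_splits3: "finite (splits3 L)"
proof (rule finite_subset)
  show "splits3 L \<subseteq> infixes L \<times> infixes L \<times> infixes L"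
  proof (clarsimp simp: splits3_def)
    fix a b c
    have "[] @ a @ (b @ c) = a @ b @ c" "(a @ b) @ c @ [] = a @ b @ c" by simp_all
    then show "a \<in> infixes (a @ b @ c) \<and> b \<in> infixes (a @ b @ c) \<and> c \<in> infixes (a @ b @ c)"
      unfolding infixes_def by blast
  qed
qed (simp add: finite_infixes)

lemma sum_take_drop_eq_sum_splits:
  "(\<Sum>k\<le>length L. F (take k L) (drop k L)) = (\<Sum>(a, b)\<in>splits L. F a b)"
  by (rule sum.reindex_bij_witness[of _ "\<lambda>(a, b). length a" "\<lambda>k. (take k L, drop k L)"])
     (auto simp: splits_def)

lemma sum_splits_splits:
  "(\<Sum>(a, r)\<in>splits L. \<Sum>(b, c)\<in>splits r. F a b c) = (\<Sum>(a, b, c)\<in>splits3 L. F a b c)"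
proof -
  have "(\<Sum>(a, r)\<in>splits L. \<Sum>(b, c)\<in>splits r. F a b c)
      = (\<Sum>(x, y)\<in>Sigma (splits L) (\<lambda>x. splits (snd x)). F (fst x) (fst y) (snd y))"
    by (subst sum.Sigma[symmetric]) (auto simp: finite_splits case_prod_beta)
  also have "\<dots> = (\<Sum>(a, b, c)\<in>splits3 L. F a b c)"
    by (rule sum.reindex_bij_witness[of _ "\<lambda>(a, b, c). ((a, b @ c), (b, c))"
                                         "\<lambda>((a, r), (b, c)). (a, b, c)"])
       (auto simp: splits_def splits3_def)
  finally show ?thesis .
qed

lemma sum_splits3_splits3:
  "(\<Sum>(a, r, c)\<in>splits3 L. \<Sum>(b1, b2, b3)\<in>splits3 r. F a b1 b2 b3 c)
   = (\<Sum>(a, b1, b2, b3, c)\<in>splits5 L. F a b1 b2 b3 c)"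
proof -
  have "(\<Sum>(a, r, c)\<in>splits3 L. \<Sum>(b1, b2, b3)\<in>splits3 r. F a b1 b2 b3 c)
      = (\<Sum>(x, y)\<in>Sigma (splits3 L) (\<lambda>x. splits3 (fst (snd x))).
            F (fst x) (fst y) (fst (snd y)) (snd (snd y)) (snd (snd x)))"
    by (subst sum.Sigma[symmetric]) (auto simp: finite_splits3 case_prod_beta)
  also have "\<dots> = (\<Sum>(a, b1, b2, b3, c)\<in>splits5 L. F a b1 b2 b3 c)"
    by (rule sum.reindex_bij_witness[of _ "\<lambda>(a, b1, b2, b3, c). ((a, b1 @ b2 @ b3, c), (b1, b2, b3))"
                                         "\<lambda>((a, r, c), (b1, b2, b3)). (a, b1, b2, b3, c)"])
       (auto simp: splits3_def splits5_def)
  finally show ?thesis .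
qed

lemma sum_splits3_splits_splits:
  "(\<Sum>(x1, x2, x3)\<in>splits3 L. \<Sum>(a, b1)\<in>splits x1. \<Sum>(b3, c)\<in>splits x3. F a b1 x2 b3 c)
   = (\<Sum>(a, b1, b2, b3, c)\<in>splits5 L. F a b1 b2 b3 c)"
proof -
  have "(\<Sum>(x1, x2, x3)\<in>splits3 L. \<Sum>(a, b1)\<in>splits x1. \<Sum>(b3, c)\<in>splits x3. F a b1 x2 b3 c)
      = (\<Sum>(x, y)\<in>Sigma (splits3 L) (\<lambda>x. splits (fst x) \<times> splits (snd (snd x))).
            F (fst (fst y)) (snd (fst y)) (fst (snd x)) (fst (snd y)) (snd (snd y)))"
    by (subst sum.Sigma[symmetric])
       (auto simp: finite_splits3 finite_splits case_prod_beta sum.cartesian_product)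
  also have "\<dots> = (\<Sum>(a, b1, b2, b3, c)\<in>splits5 L. F a b1 b2 b3 c)"
    by (rule sum.reindex_bij_witness[of _ "\<lambda>(a, b1, b2, b3, c). ((a @ b1, b2, b3 @ c), ((a, b1), (b3, c)))"
                                         "\<lambda>((x1, x2, x3), ((a, b1), (b3, c))). (a, b1, x2, b3, c)"])
       (auto simp: splits3_def splits5_def splits_def)
  finally show ?thesis .
qed

lemma sum_splits3_shift_left:
  "(\<Sum>(a, b, c)\<in>splits3 L. if b = [] then 0 else H (a @ [hd b]) (tl b) c)
   = (\<Sum>(a, b, c)\<in>{x\<in>splits3 L. fst x \<noteq> []}. H a b c)"
proof -
  have "(\<Sum>(a, b, c)\<in>splits3 L. if b = [] then 0 else H (a @ [hd b]) (tl b) c)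
      = (\<Sum>(a, b, c)\<in>{x\<in>splits3 L. fst (snd x) \<noteq> []}. H (a @ [hd b]) (tl b) c)"
    by (rule sum.mono_neutral_cong_right) (auto simp: finite_splits3)
  also have "\<dots> = (\<Sum>(a, b, c)\<in>{x\<in>splits3 L. fst x \<noteq> []}. H a b c)"
    by (rule sum.reindex_bij_witness[of _ "\<lambda>(a, b, c). (butlast a, last a # b, c)"
                                         "\<lambda>(a, b, c). (a @ [hd b], tl b, c)"])
       (auto simp: splits3_def)
  finally show ?thesis .
qed

lemma sum_splits3_shift_right:
  "(\<Sum>(a, b, c)\<in>splits3 L. if b = [] then 0 else H a (butlast b) (last b # c))
   = (\<Sum>(a, b, c)\<in>{x\<in>splits3 L. snd (snd x) \<noteq> []}. H a b c)"
proof -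
  have "(\<Sum>(a, b, c)\<in>splits3 L. if b = [] then 0 else H a (butlast b) (last b # c))
      = (\<Sum>(a, b, c)\<in>{x\<in>splits3 L. fst (snd x) \<noteq> []}. H a (butlast b) (last b # c))"
    by (rule sum.mono_neutral_cong_right) (auto simp: finite_splits3)
  also have "\<dots> = (\<Sum>(a, b, c)\<in>{x\<in>splits3 L. snd (snd x) \<noteq> []}. H a b c)"
    by (rule sum.reindex_bij_witness[of _ "\<lambda>(a, b, c). (a, b @ [hd c], tl c)"
                                         "\<lambda>(a, b, c). (a, butlast b, last b # c)"])
       (auto simp: splits3_def)
  finally show ?thesis .
qed

lemma sum_splits3_Nil_left:
  "(\<Sum>(a, b, c)\<in>{x\<in>splits3 L. fst x = []}. H a b c) = (\<Sum>(b, c)\<in>splits L. H [] b c)"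
  by (rule sum.reindex_bij_witness[of _ "\<lambda>(b, c). ([], b, c)" "\<lambda>(a, b, c). (b, c)"])
     (auto simp: splits3_def splits_def)

lemma sum_splits3_Nil_right:
  "(\<Sum>(a, b, c)\<in>{x\<in>splits3 L. snd (snd x) = []}. H a b c) = (\<Sum>(a, b)\<in>splits L. H a b [])"
  by (rule sum.reindex_bij_witness[of _ "\<lambda>(a, b). (a, b, [])" "\<lambda>(a, b, c). (a, b)"])
     (auto simp: splits3_def splits_def)


lemma splits3_outer_length_one:
  assumes "(a, b, c) \<in> splits3 u" "length a + length c = 1"
  shows "(a, b, c) = ([], butlast u, [last u]) \<or> (a, b, c) = ([hd u], tl u, [])"
proof -
  consider x where "a = []" "c = [x]" | x where "a = [x]" "c = []"
    using assms(2) by (auto simp: add_is_1 length_Suc_conv)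
  then show ?thesis
    using assms(1) by cases (auto simp: splits3_def)
qed

lemma sum_filter_split: "finite A \<Longrightarrow> sum f A = sum f {x\<in>A. Q x} + sum f {x\<in>A. \<not> Q x}"
  by (subst sum.union_disjoint[symmetric]) (auto intro: sum.cong)

lemma sum_UNIV_eq_single:
  "(\<And>l. l \<noteq> l0 \<Longrightarrow> G l = 0) \<Longrightarrow> (\<Sum>l\<in>(UNIV::'c::finite set). G l) = G l0"
proof -
  assume "\<And>l. l \<noteq> l0 \<Longrightarrow> G l = 0"
  then have "(\<Sum>l\<in>UNIV. G l) = (\<Sum>l\<in>UNIV. if l = l0 then G l else 0)"
    by (intro sum.cong) auto
  then show ?thesis by simp
qed

lemma chain_append: "chain s t i (xs @ ys) \<longleftrightarrow> chain s t i xs \<and> chain s t (endpt t i xs) ys"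
  by (induction xs arbitrary: i) auto

lemma endpt_append: "endpt t i (xs @ ys) = endpt t (endpt t i xs) ys"
  by (induction xs arbitrary: i) auto

lemma endpt_snoc: "endpt t i (xs @ [x]) = t x"
  by (simp add: endpt_append)

lemma energy_val_mult: "energy_val val \<Longrightarrow> a * b \<noteq> 0 \<Longrightarrow> val a + val b \<le> val (a * b)"
  unfolding energy_val_def by blast

lemma energy_val_sum_ge:
  assumes "energy_val val" "finite A" "\<forall>x\<in>A. f x \<noteq> 0 \<longrightarrow> c \<le> val (f x)" "sum f A \<noteq> 0"
  shows "c \<le> val (sum f A)"
  using assms(2-)
proof (induction A rule: finite_induct)
  case (insert x F)
  show ?case
  proof (cases "f x = 0 \<or> sum f F = 0")
    case True
    then show ?thesis using insert by auto
  next
    case False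
    have "c \<le> val (f x)" "c \<le> val (sum f F)"
      using insert False by auto
    moreover have "min (val (f x)) (val (sum f F)) \<le> val (f x + sum f F)"
      using assms(1) insert.prems(2) False insert.hyps unfolding energy_val_def by simp
    ultimately show ?thesis using insert.hyps by simp
  qed
qed simp

lemma energy_val_sum_less_ex:
  assumes "energy_val val" "finite A" "sum f A \<noteq> 0" "val (sum f A) < c"
  shows "\<exists>x\<in>A. f x \<noteq> 0 \<and> val (f x) < c"
  using energy_val_sum_ge[OF assms(1,2), of f c] assms(3,4) by force

lemma bdd_below_if_finite_negative:
  assumes "finite {x. Q x \<and> (h x :: real) < 0}"
  shows "\<exists>B. \<forall>x. Q x \<longrightarrow> B \<le> h x"
proof -
  obtain B where "\<forall>y\<in>h ` {x. Q x \<and> h x < 0}. B \<le> y"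
    using bdd_below_finite[OF finite_imageI[OF assms]] unfolding bdd_below_def by blast
  then have "Q x \<Longrightarrow> min B 0 \<le> h x" for x by (cases "h x < 0") force+
  then show ?thesis by blast
qed

section \<open>The A-infinity relations along paths of the quiver\<close>

locale Ainf_quiver =
  fixes s t :: "'b::finite \<Rightarrow> 'o::finite" and deg :: "'b \<Rightarrow> bool" and unit :: "'o \<Rightarrow> 'b"
    and mop :: "'o \<Rightarrow> 'b list \<Rightarrow> 'b \<Rightarrow> 'r::comm_ring_1" and val :: "'r \<Rightarrow> real" and E :: "'b set"
  assumes energy: "energy_val val"
    and Ainf: "unital_Ainf s t deg unit mop"
    and convergent: "energy_convergent s t E val mop"
    and E_odd: "\<forall>e\<in>E. deg e"
begin

definition qpath :: "'o \<Rightarrow> 'b list \<Rightarrow> bool" where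
  "qpath i es \<longleftrightarrow> chain s t i es \<and> set es \<subseteq> E"

abbreviation W :: "'o \<times> 'b list \<Rightarrow> 'r" where
  "W \<equiv> Wpot s t E unit mop"

abbreviation P :: "'b \<Rightarrow> 'o \<times> 'b list \<Rightarrow> 'r" where
  "P y \<equiv> m0b s t E mop y"

definition even_nonunits :: "'b set" where
  "even_nonunits = {y. \<not> deg y \<and> y \<notin> range unit}"

lemma qpath_append: "qpath i (xs @ ys) \<longleftrightarrow> qpath i xs \<and> qpath (endpt t i xs) ys"
  by (auto simp: qpath_def chain_append)

lemma mop_nonzeroD: "mop i xs z \<noteq> 0 \<Longrightarrow> chain s t i xs \<and> s z = i \<and> t z = endpt t i xs"
  using Ainf unfolding unital_Ainf_def by blast

lemma mop_nonzero_deg: "mop i xs z \<noteq> 0 \<Longrightarrow> deg z \<longleftrightarrow> odd (n_even deg xs)"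
  using Ainf unfolding unital_Ainf_def by blast

lemma n_even_eq_0: "set xs \<subseteq> E \<Longrightarrow> n_even deg xs = 0"
  using E_odd unfolding n_even_def by (auto simp: filter_empty_conv)

lemma unit_src [simp]: "s (unit i) = i"
  and unit_tgt [simp]: "t (unit i) = i"
  using Ainf unfolding unital_Ainf_def by blast+

lemma inj_unit: "inj unit"
  by (metis injI unit_src)

lemma mop_unit_left: "mop (s x) [unit (s x), x] z = (if z = x then 1 else 0)"
  using Ainf unfolding unital_Ainf_def by blast

lemma mop_unit_right:
  "(- 1) ^ (if deg x then 1 else 0) * mop (s x) [x, unit (t x)] z = (if z = x then 1 else 0)"
  using Ainf unfolding unital_Ainf_def by blast

lemma mop_unit_eq_0: "length xs \<noteq> 2 \<Longrightarrow> unit j \<in> set xs \<Longrightarrow> mop i xs z = 0"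
  using Ainf unfolding unital_Ainf_def by blast

lemma Wpot_eq: "W (j, w) = (if qpath j w then mop j w (unit j) else 0)"
proof -
  have "mop j w (unit l) = 0" if "l \<noteq> j" for l
    using that mop_nonzeroD[of j w "unit l"] by auto
  then have "(\<Sum>l\<in>UNIV. mop j w (unit l)) = mop j w (unit j)"
    by (rule sum_UNIV_eq_single)
  then show ?thesis by (simp add: Wpot_def m0b_def qpath_def if_distrib cong: if_cong)
qed

lemma Wpot_nonzero_loop: "W (j, w) \<noteq> 0 \<Longrightarrow> endpt t j w = j"
  by (auto simp: Wpot_eq split: if_splits dest: mop_nonzeroD)

lemma m0b_eq: "P y (j, w) = (if qpath j w then mop j w y else 0)"
  by (simp add: m0b_def qpath_def)

lemma pmul_eq_sum_splits: "pmul t f g (i, es) = (\<Sum>(a, b)\<in>splits es. f (endpt t i a, b) * g (i, a))"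
  unfolding pmul_def using sum_take_drop_eq_sum_splits[of "\<lambda>a b. f (endpt t i a, b) * g (i, a)" es]
  by simp

lemma Ainf_equation:
  "chain s t i xs \<Longrightarrow>
     (\<Sum>k1\<le>length xs. \<Sum>k2\<le>length xs - k1. \<Sum>y\<in>UNIV.
        (- 1) ^ n_even deg (take k1 xs)
        * mop (endpt t i (take k1 xs)) (take k2 (drop k1 xs)) y
        * mop i (take k1 xs @ [y] @ drop (k1 + k2) xs) z) = 0"
  using Ainf unfolding unital_Ainf_def by blast

lemma Ainf_equation_qpath:
  assumes "qpath j u"
  shows "(\<Sum>(a, b, c)\<in>splits3 u. \<Sum>y\<in>UNIV. mop (endpt t j a) b y * mop j (a @ [y] @ c) e) = 0"
proof -
  have ch: "chain s t j u" and E: "set u \<subseteq> E" using assms by (auto simp: qpath_def)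
  have no_signs: "n_even deg (take k u) = 0" for k
    by (rule n_even_eq_0) (meson E order_trans set_take_subset)
  have "0 = (\<Sum>k1\<le>length u. \<Sum>k2\<le>length u - k1. \<Sum>y\<in>UNIV.
            (- 1) ^ n_even deg (take k1 u)
            * mop (endpt t j (take k1 u)) (take k2 (drop k1 u)) y
            * mop j (take k1 u @ [y] @ drop (k1 + k2) u) e)"
    using Ainf_equation[OF ch] by simp
  also have "\<dots> = (\<Sum>k1\<le>length u. \<Sum>k2\<le>length (drop k1 u). \<Sum>y\<in>UNIV.
            mop (endpt t j (take k1 u)) (take k2 (drop k1 u)) y
            * mop j (take k1 u @ [y] @ drop k2 (drop k1 u)) e)"
    by (simp add: no_signs add.commute)
  also have "\<dots> = (\<Sum>k1\<le>length u. \<Sum>(b, c)\<in>splits (drop k1 u). \<Sum>y\<in>UNIV.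
            mop (endpt t j (take k1 u)) b y * mop j (take k1 u @ [y] @ c) e)"
    by (intro sum.cong refl sum_take_drop_eq_sum_splits)
  also have "\<dots> = (\<Sum>(a, r)\<in>splits u. \<Sum>(b, c)\<in>splits r. \<Sum>y\<in>UNIV.
            mop (endpt t j a) b y * mop j (a @ [y] @ c) e)"
    by (rule sum_take_drop_eq_sum_splits)
  also have "\<dots> = (\<Sum>(a, b, c)\<in>splits3 u. \<Sum>y\<in>UNIV. mop (endpt t j a) b y * mop j (a @ [y] @ c) e)"
    by (rule sum_splits_splits)
  finally show ?thesis by simp
qed

definition unit_insertion :: "'o \<Rightarrow> 'b list \<Rightarrow> 'b list \<Rightarrow> 'b list \<Rightarrow> 'b \<Rightarrow> 'r" where
  "unit_insertion j a b c e =
     (\<Sum>l\<in>UNIV. mop (endpt t j a) b (unit l) * mop j (a @ [unit l] @ c) e)"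

definition even_insertion :: "'o \<Rightarrow> 'b list \<Rightarrow> 'b list \<Rightarrow> 'b list \<Rightarrow> 'b \<Rightarrow> 'r" where
  "even_insertion j a b c e =
     (\<Sum>y\<in>even_nonunits. mop (endpt t j a) b y * mop j (a @ [y] @ c) e)"

text \<open>Odd outputs do not occur: m applied to a word of odd arrows has even degree.\<close>

lemma sum_insertions_split:
  assumes "set b \<subseteq> E"
  shows "(\<Sum>y\<in>UNIV. mop (endpt t j a) b y * mop j (a @ [y] @ c) e)
         = unit_insertion j a b c e + even_insertion j a b c e"
proof -
  define X where "X y = mop (endpt t j a) b y * mop j (a @ [y] @ c) e" for y
  have odd_vanish: "X y = 0" if "deg y" for y
    using that mop_nonzero_deg[of "endpt t j a" b y] n_even_eq_0[OF assms] unfolding X_def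
    by (metis mult_zero_left odd_pos less_irrefl)
  have "(\<Sum>y\<in>UNIV. X y) = (\<Sum>y\<in>range unit. X y) + (\<Sum>y\<in>UNIV - range unit. X y)"
    by (metis Diff_partition finite sum.subset_diff top_greatest add.commute)
  also have "(\<Sum>y\<in>range unit. X y) = (\<Sum>l\<in>UNIV. X (unit l))"
    by (rule sum.reindex[OF inj_unit, unfolded comp_def])
  also have "(\<Sum>y\<in>UNIV - range unit. X y) = (\<Sum>y\<in>even_nonunits. X y)"
    by (rule sum.mono_neutral_right) (auto simp: even_nonunits_def odd_vanish)
  finally show ?thesis by (simp add: X_def unit_insertion_def even_insertion_def)
qed

lemma unit_insertion_eq_0:
  assumes "length a + length c \<noteq> 1"
  shows "unit_insertion j a b c e = 0"
proof -
  have "mop j (a @ [unit l] @ c) e = 0" for l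
    by (rule mop_unit_eq_0[where j = l]) (use assms in auto)
  then show ?thesis unfolding unit_insertion_def by simp
qed

lemma unit_insertion_Nil_left:
  assumes "qpath j (w @ [x])"
  shows "unit_insertion j [] w [x] e = (if e = x then W (j, w) else 0)"
proof -
  have "unit_insertion j [] w [x] e = mop j w (unit j) * mop j [unit j, x] e"
    unfolding unit_insertion_def
    by simp (rule sum_UNIV_eq_single, metis mop_nonzeroD mult_zero_left unit_src)
  also have "\<dots> = (if e = x then W (j, w) else 0)"
  proof (cases "mop j w (unit j) = 0")
    case False
    then have "s x = j"
      using assms mop_nonzeroD[of j w "unit j"] by (simp add: qpath_def chain_append)
    then show ?thesis using assms mop_unit_left[of x e] by (simp add: Wpot_eq qpath_append)
  qed (use assms in \<open>simp add: Wpot_eq qpath_append\<close>)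
  finally show ?thesis .
qed

lemma unit_insertion_Nil_right:
  assumes "qpath j (x # w)"
  shows "unit_insertion j [x] w [] e = - (if e = x then W (t x, w) else 0)"
proof -
  have j: "j = s x" and "deg x" and W: "W (t x, w) = mop (t x) w (unit (t x))"
    using assms E_odd by (auto simp: qpath_def Wpot_eq)
  have "unit_insertion j [x] w [] e = mop (t x) w (unit (t x)) * mop (s x) [x, unit (t x)] e"
    unfolding unit_insertion_def j
    by simp (rule sum_UNIV_eq_single, metis mop_nonzeroD mult_zero_left unit_src)
  also have "mop (s x) [x, unit (t x)] e = - (if e = x then 1 else 0)"
    using mop_unit_right[of x e] \<open>deg x\<close> by (simp add: minus_equation_iff)
  finally show ?thesis by (simp add: W)
qed

lemma sum_unit_insertions:
  assumes "qpath j u" "u \<noteq> []"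
  shows "(\<Sum>(a, b, c)\<in>splits3 u. unit_insertion j a b c e)
         = (if e = last u then W (j, butlast u) else 0) - (if e = hd u then W (t (hd u), tl u) else 0)"
proof -
  have u: "u = butlast u @ [last u]" "u = hd u # tl u" using assms(2) by simp_all
  let ?Z = "{([], butlast u, [last u]), ([hd u], tl u, [])}"
  have "(\<Sum>(a, b, c)\<in>splits3 u. unit_insertion j a b c e) = (\<Sum>(a, b, c)\<in>?Z. unit_insertion j a b c e)"
  proof (rule sum.mono_neutral_right[OF finite_splits3])
    show "?Z \<subseteq> splits3 u" unfolding splits3_def using u by auto
    show "\<forall>z\<in>splits3 u - ?Z. (case z of (a, b, c) \<Rightarrow> unit_insertion j a b c e) = 0"
      using splits3_outer_length_one unit_insertion_eq_0 by fastforce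
  qed
  also have "\<dots> = unit_insertion j [] (butlast u) [last u] e + unit_insertion j [hd u] (tl u) [] e"
    by simp
  finally show ?thesis
    using unit_insertion_Nil_left[of j "butlast u" "last u" e] unit_insertion_Nil_right[of j "hd u" "tl u" e]
      assms(1) u by simp
qed

text \<open>The A-infinity equation along a path: the unit terms of m_0^b reproduce the two commutator
  terms of W, so the remaining even terms, which are multiples of the P_f, must cancel them.\<close>

lemma sum_even_insertions:
  assumes "qpath j u"
  shows "(\<Sum>(a, b, c)\<in>splits3 u. even_insertion j a b c e)
         = (if u = [] then 0 else
              (if e = hd u then W (t (hd u), tl u) else 0) - (if e = last u then W (j, butlast u) else 0))"
proof -
  have E: "set b \<subseteq> E" if "(a, b, c) \<in> splits3 u" for a b c
    using that assms by (auto simp: splits3_def qpath_def)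
  have "0 = (\<Sum>(a, b, c)\<in>splits3 u. unit_insertion j a b c e + even_insertion j a b c e)"
    unfolding Ainf_equation_qpath[OF assms, of e, symmetric]
    using sum_insertions_split E by (intro sum.cong refl) auto
  also have "\<dots> = (\<Sum>(a, b, c)\<in>splits3 u. unit_insertion j a b c e)
                 + (\<Sum>(a, b, c)\<in>splits3 u. even_insertion j a b c e)"
    by (simp add: sum.distrib case_prod_beta)
  finally have "(\<Sum>(a, b, c)\<in>splits3 u. even_insertion j a b c e)
                = - (\<Sum>(a, b, c)\<in>splits3 u. unit_insertion j a b c e)"
    by (simp add: eq_neg_iff_add_eq_0 add.commute)
  moreover have "splits3 ([] :: 'b list) = {([], [], [])}" by (auto simp: splits3_def)
  ultimately show ?thesis
    using unit_insertion_eq_0[of "[]" "[]" j "[]" e] sum_unit_insertions[OF assms] by (cases "u = []") simp_all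
qed

definition commutator :: "('o \<times> 'b list \<Rightarrow> 'r) \<Rightarrow> 'o \<times> 'b list \<Rightarrow> 'r" where
  "commutator g p = pmul t W g p - pmul t g W p"

lemma commutator_eq_sum_splits3:
  "commutator g (i, es)
   = (\<Sum>(a, b, c)\<in>{x\<in>splits3 es. fst x \<noteq> []}. g (i, a @ c) * W (endpt t i a, b))
     - (\<Sum>(a, b, c)\<in>{x\<in>splits3 es. snd (snd x) \<noteq> []}. g (i, a @ c) * W (endpt t i a, b))"
proof -
  define F where "F a b c = g (i, a @ c) * W (endpt t i a, b)" for a b c
  have "F a b [] = W (endpt t i a, b) * g (i, a)" for a b
    by (simp add: F_def mult.commute)
  moreover have "F [] a b = g (endpt t i a, b) * W (i, a)" for a b
    using Wpot_nonzero_loop[of i a] by (cases "W (i, a) = 0") (auto simp: F_def)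
  ultimately have "commutator g (i, es)
      = (\<Sum>(a, b, c)\<in>{x\<in>splits3 es. snd (snd x) = []}. F a b c)
        - (\<Sum>(a, b, c)\<in>{x\<in>splits3 es. fst x = []}. F a b c)"
    unfolding commutator_def sum_splits3_Nil_left sum_splits3_Nil_right pmul_eq_sum_splits
    by (simp add: case_prod_beta)
  also have "\<dots> = (\<Sum>(a, b, c)\<in>{x\<in>splits3 es. fst x \<noteq> []}. F a b c)
                 - (\<Sum>(a, b, c)\<in>{x\<in>splits3 es. snd (snd x) \<noteq> []}. F a b c)"
    using sum_filter_split[OF finite_splits3, of "\<lambda>(a, b, c). F a b c" es "\<lambda>x. fst x = []"]
          sum_filter_split[OF finite_splits3, of "\<lambda>(a, b, c). F a b c" es "\<lambda>x. snd (snd x) = []"]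
    by (simp add: case_prod_beta algebra_simps)
  finally show ?thesis by (simp add: F_def)
qed

lemma commutator_eq_sum_even_insertions:
  assumes "qpath i es"
  shows "commutator g (i, es)
       = (\<Sum>(al, be, ga)\<in>splits3 es. \<Sum>e\<in>UNIV.
            g (i, al @ [e] @ ga) * (\<Sum>(a, b, c)\<in>splits3 be. even_insertion (endpt t i al) a b c e))"
proof -
  define F where "F a b c = g (i, a @ c) * W (endpt t i a, b)" for a b c
  have summand: "(\<Sum>e\<in>UNIV. g (i, al @ [e] @ ga)
                  * (\<Sum>(a, b, c)\<in>splits3 be. even_insertion (endpt t i al) a b c e))
        = (if be = [] then 0 else F (al @ [hd be]) (tl be) ga)
          - (if be = [] then 0 else F al (butlast be) (last be # ga))"
    if "(al, be, ga) \<in> splits3 es" for al be ga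
  proof -
    have "qpath (endpt t i al) be"
      using that assms by (auto simp: splits3_def qpath_append)
    then show ?thesis
      by (simp add: sum_even_insertions F_def endpt_snoc right_diff_distrib sum_subtractf
          if_distrib[of "\<lambda>x. _ * x"] cong: if_cong)
  qed
  have "(\<Sum>(al, be, ga)\<in>splits3 es. \<Sum>e\<in>UNIV.
            g (i, al @ [e] @ ga) * (\<Sum>(a, b, c)\<in>splits3 be. even_insertion (endpt t i al) a b c e))
      = (\<Sum>(al, be, ga)\<in>splits3 es. if be = [] then 0 else F (al @ [hd be]) (tl be) ga)
        - (\<Sum>(al, be, ga)\<in>splits3 es. if be = [] then 0 else F al (butlast be) (last be # ga))"
    unfolding sum_subtractf[symmetric] by (rule sum.cong[OF refl]) (clarify, simp only: prod.case summand)
  also have "\<dots> = (\<Sum>(a, b, c)\<in>{x\<in>splits3 es. fst x \<noteq> []}. F a b c)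
                 - (\<Sum>(a, b, c)\<in>{x\<in>splits3 es. snd (snd x) \<noteq> []}. F a b c)"
    by (simp only: sum_splits3_shift_left sum_splits3_shift_right)
  also have "\<dots> = commutator g (i, es)"
    by (simp add: commutator_eq_sum_splits3 F_def)
  finally show ?thesis ..
qed

end

section \<open>Expansion of the commutator in the P_f\<close>

text \<open>An insertion (y, i, \<alpha>, \<beta>1, e, \<beta>3, \<gamma>) stands for the contribution
  g(\<alpha> e \<gamma>) m(\<beta>1, X_y, \<beta>3)_e \<cdot> (\<beta>3 \<gamma>) P_y (\<alpha> \<beta>1) to the commutator
  (paths listed first arrow first), where \<alpha> e \<gamma> is a path starting at v_i and X_y is an
  even non-unit.\<close>

type_synonym ('b, 'o) insertion = "'b \<times> 'o \<times> 'b list \<times> 'b list \<times> 'b \<times> 'b list \<times> 'b list"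

context Ainf_quiver
begin

definition ins_coeff :: "('o \<times> 'b list \<Rightarrow> 'r) \<Rightarrow> ('b, 'o) insertion \<Rightarrow> 'r" where
  "ins_coeff g = (\<lambda>(y, i, al, b1, e, b3, ga).
     g (i, al @ [e] @ ga) * mop (endpt t i al) (b1 @ [y] @ b3) e)"

definition insertions_at :: "'o \<Rightarrow> 'b list \<Rightarrow> 'b list \<Rightarrow> ('b, 'o) insertion set" where
  "insertions_at i x1 x3 =
     {(y, i', al, b1, e, b3, ga). y \<in> even_nonunits \<and> i' = i \<and> al @ b1 = x1 \<and> b3 @ ga = x3}"

lemma insertions_at_eq_image:
  "insertions_at i x1 x3 = (\<lambda>((al, b1), (b3, ga), (e, y)). (y, i, al, b1, e, b3, ga))
     ` (splits x1 \<times> splits x3 \<times> UNIV \<times> even_nonunits)"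
  unfolding insertions_at_def splits_def by (auto simp: image_iff)

lemma finite_insertions_at: "finite (insertions_at i x1 x3)"
  unfolding insertions_at_eq_image by (intro finite_imageI finite_cartesian_product finite_splits) auto

lemma sum_insertions_at:
  "(\<Sum>\<tau>\<in>insertions_at i x1 x3. H \<tau>)
   = (\<Sum>(al, b1)\<in>splits x1. \<Sum>(b3, ga)\<in>splits x3. \<Sum>e\<in>UNIV. \<Sum>y\<in>even_nonunits. H (y, i, al, b1, e, b3, ga))"
proof -
  have "(\<Sum>(al, b1)\<in>splits x1. \<Sum>(b3, ga)\<in>splits x3. \<Sum>e\<in>UNIV. \<Sum>y\<in>even_nonunits. H (y, i, al, b1, e, b3, ga))
      = (\<Sum>z\<in>splits x1 \<times> splits x3 \<times> UNIV \<times> even_nonunits.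
           H (snd (snd (snd z)), i, fst (fst z), snd (fst z), fst (snd (snd z)), fst (fst (snd z)), snd (fst (snd z))))"
    by (simp add: case_prod_beta sum.cartesian_product)
  also have "\<dots> = (\<Sum>\<tau>\<in>insertions_at i x1 x3. H \<tau>)"
    by (rule sum.reindex_bij_witness[of _ "\<lambda>(y, i', al, b1, e, b3, ga). ((al, b1), (b3, ga), (e, y))"
                                         "\<lambda>((al, b1), (b3, ga), (e, y)). (y, i, al, b1, e, b3, ga)"])
       (auto simp: insertions_at_def splits_def)
  finally show ?thesis by simp
qed

lemma commutator_eq_sum_insertions:
  assumes "qpath i es"
  shows "commutator g (i, es)
     = (\<Sum>(x1, x2, x3)\<in>splits3 es. \<Sum>\<tau>\<in>insertions_at i x1 x3.
          ins_coeff g \<tau> * P (fst \<tau>) (endpt t i x1, x2))"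
proof -
  define \<Phi> where "\<Phi> al b1 b2 b3 ga = (\<Sum>e\<in>UNIV. \<Sum>y\<in>even_nonunits.
      ins_coeff g (y, i, al, b1, e, b3, ga) * P y (endpt t i (al @ b1), b2))" for al b1 b2 b3 ga
  have inner: "(\<Sum>e\<in>UNIV. g (i, al @ [e] @ ga)
                  * (\<Sum>(b1, b2, b3)\<in>splits3 be. even_insertion (endpt t i al) b1 b2 b3 e))
             = (\<Sum>(b1, b2, b3)\<in>splits3 be. \<Phi> al b1 b2 b3 ga)"
    if "(al, be, ga) \<in> splits3 es" for al be ga
  proof -
    have P_eq_mop: "P y (endpt t i (al @ b1), b2) = mop (endpt t (endpt t i al) b1) b2 y"
      if "(b1, b2, b3) \<in> splits3 be" for b1 b2 b3 y
    proof -
      have "qpath i ((al @ b1) @ b2 @ (b3 @ ga))"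
        using assms \<open>(al, be, ga) \<in> splits3 es\<close> that by (auto simp: splits3_def)
      then show ?thesis by (simp add: qpath_append m0b_eq endpt_append)
    qed
    show ?thesis
      unfolding \<Phi>_def even_insertion_def sum_distrib_left
      by (subst sum.swap) (auto simp: P_eq_mop ins_coeff_def algebra_simps sum_distrib_left
          intro!: sum.cong)
  qed
  have "commutator g (i, es) = (\<Sum>(al, be, ga)\<in>splits3 es. \<Sum>(b1, b2, b3)\<in>splits3 be. \<Phi> al b1 b2 b3 ga)"
    unfolding commutator_eq_sum_even_insertions[OF assms]
    by (rule sum.cong[OF refl]) (clarify, simp only: prod.case inner)
  also have "\<dots> = (\<Sum>(al, b1, b2, b3, ga)\<in>splits5 es. \<Phi> al b1 b2 b3 ga)"
    by (rule sum_splits3_splits3)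
  also have "\<dots> = (\<Sum>(x1, x2, x3)\<in>splits3 es. \<Sum>(al, b1)\<in>splits x1. \<Sum>(b3, ga)\<in>splits x3. \<Phi> al b1 x2 b3 ga)"
    by (rule sum_splits3_splits_splits[symmetric])
  also have "\<dots> = (\<Sum>(x1, x2, x3)\<in>splits3 es. \<Sum>\<tau>\<in>insertions_at i x1 x3.
                    ins_coeff g \<tau> * P (fst \<tau>) (endpt t i x1, x2))"
    unfolding sum_insertions_at \<Phi>_def
    by (rule sum.cong[OF refl], clarify, rule sum.cong[OF refl], clarify) (simp add: splits_def)
  finally show ?thesis .
qed

definition on_qpaths :: "('o \<times> 'b list \<Rightarrow> 'r) \<Rightarrow> bool" where
  "on_qpaths f \<longleftrightarrow> (\<forall>i w. f (i, w) \<noteq> 0 \<longrightarrow> qpath i w)"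

lemma cpa_iff: "f \<in> cpa s t E val \<longleftrightarrow> on_qpaths f \<and> (\<forall>c. finite {p. f p \<noteq> 0 \<and> val (f p) < c})"
  by (auto simp: cpa_def on_qpaths_def qpath_def)

lemma cpa_if_finite_support: "on_qpaths f \<Longrightarrow> finite {p. f p \<noteq> 0} \<Longrightarrow> f \<in> cpa s t E val"
  unfolding cpa_iff by (auto elim: rev_finite_subset)

lemma on_qpaths_pmul:
  assumes "on_qpaths f" "on_qpaths g"
  shows "on_qpaths (pmul t f g)"
  unfolding on_qpaths_def
proof (intro allI impI)
  fix i w assume "pmul t f g (i, w) \<noteq> 0"
  then obtain a b where "(a, b) \<in> splits w" "f (endpt t i a, b) * g (i, a) \<noteq> 0"
    unfolding pmul_eq_sum_splits by (auto elim!: sum.not_neutral_contains_not_neutral)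
  then have "qpath (endpt t i a) b" "qpath i a"
    using assms unfolding on_qpaths_def by (metis mult_zero_left, metis mult_zero_right)
  then show "qpath i w" using \<open>(a, b) \<in> splits w\<close> by (auto simp: splits_def qpath_append)
qed

lemma on_qpaths_Wpot: "on_qpaths W"
  by (simp add: on_qpaths_def Wpot_eq)

lemma on_qpaths_m0b: "on_qpaths (P y)"
  by (simp add: on_qpaths_def m0b_eq)

definition path_monomial :: "'o \<times> 'b list \<Rightarrow> 'o \<times> 'b list \<Rightarrow> 'r" where
  "path_monomial q = (\<lambda>p. if p = q \<and> qpath (fst q) (snd q) then 1 else 0)"

definition ins_prefix :: "('o \<times> 'b list \<Rightarrow> 'r) \<Rightarrow> ('b, 'o) insertion \<Rightarrow> 'o \<times> 'b list \<Rightarrow> 'r" where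
  "ins_prefix g \<tau> = (\<lambda>p. case \<tau> of (y, i, al, b1, e, b3, ga) \<Rightarrow>
      if p = (i, al @ b1) \<and> qpath i (al @ b1) then ins_coeff g \<tau> else 0)"

definition ins_suffix :: "('b, 'o) insertion \<Rightarrow> 'o \<times> 'b list \<Rightarrow> 'r" where
  "ins_suffix \<tau> = (case \<tau> of (y, i, al, b1, e, b3, ga) \<Rightarrow> path_monomial (t y, b3 @ ga))"

definition ins_term :: "('o \<times> 'b list \<Rightarrow> 'r) \<Rightarrow> ('b, 'o) insertion \<Rightarrow> 'o \<times> 'b list \<Rightarrow> 'r" where
  "ins_term g \<tau> = pmul t (pmul t (ins_suffix \<tau>) (P (fst \<tau>))) (ins_prefix g \<tau>)"

lemma ins_suffix_cpa: "ins_suffix \<tau> \<in> cpa s t E val"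
proof -
  obtain y i al b1 e b3 ga where \<tau>: "\<tau> = (y, i, al, b1, e, b3, ga)" by (cases \<tau>) blast
  have "finite {p. ins_suffix \<tau> p \<noteq> 0}"
    by (rule finite_subset[of _ "{(t y, b3 @ ga)}"]) (auto simp: ins_suffix_def path_monomial_def \<tau>)
  then show ?thesis
    by (intro cpa_if_finite_support) (auto simp: on_qpaths_def ins_suffix_def path_monomial_def \<tau>)
qed

lemma ins_prefix_cpa: "ins_prefix g \<tau> \<in> cpa s t E val"
proof -
  obtain y i al b1 e b3 ga where \<tau>: "\<tau> = (y, i, al, b1, e, b3, ga)" by (cases \<tau>) blast
  have "finite {p. ins_prefix g \<tau> p \<noteq> 0}"
    by (rule finite_subset[of _ "{(i, al @ b1)}"]) (auto simp: ins_prefix_def \<tau>)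
  then show ?thesis
    by (intro cpa_if_finite_support) (auto simp: on_qpaths_def ins_prefix_def \<tau>)
qed

lemma on_qpaths_ins_term: "on_qpaths (ins_term g \<tau>)"
  using ins_suffix_cpa ins_prefix_cpa
  unfolding ins_term_def cpa_iff by (intro on_qpaths_pmul on_qpaths_m0b) auto

lemma sum_ins_terms_in_alg_ideal:
  assumes "finite T" "\<forall>\<tau>\<in>T. fst \<tau> \<in> even_nonunits"
  shows "(\<lambda>p. \<Sum>\<tau>\<in>T. ins_term g \<tau> p)
           \<in> alg_ideal t (cpa s t E val) {P f | f. \<not> deg f \<and> f \<notin> range unit}"
proof -
  obtain en where en: "bij_betw en {..<card T} T"
    using ex_bij_betw_nat_finite[OF assms(1)] by (auto simp: lessThan_atLeast0)
  then have "(\<lambda>p. \<Sum>\<tau>\<in>T. ins_term g \<tau> p)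
      = (\<lambda>p. \<Sum>l<card T. pmul t (pmul t (ins_suffix (en l)) (P (fst (en l)))) (ins_prefix g (en l)) p)"
    unfolding ins_term_def by (intro ext sum.reindex_bij_betw[symmetric])
  moreover have "P (fst (en l)) \<in> {P f | f. \<not> deg f \<and> f \<notin> range unit}" if "l < card T" for l
    using that en assms(2) by (auto simp: bij_betw_def even_nonunits_def)
  ultimately show ?thesis unfolding alg_ideal_def
    by (intro CollectI exI[of _ "card T"] exI[of _ "\<lambda>l. ins_suffix (en l)"]
          exI[of _ "\<lambda>l. P (fst (en l))"] exI[of _ "\<lambda>l. ins_prefix g (en l)"] conjI)
       (auto simp: ins_suffix_cpa ins_prefix_cpa)
qed

lemma ins_term_eq_sum_splits3:
  "ins_term g \<tau> (i, es) = (\<Sum>(x1, x2, x3)\<in>splits3 es.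
     ins_suffix \<tau> (endpt t i (x1 @ x2), x3) * P (fst \<tau>) (endpt t i x1, x2) * ins_prefix g \<tau> (i, x1))"
proof -
  have "ins_term g \<tau> (i, es) = (\<Sum>(x1, r)\<in>splits es. \<Sum>(x2, x3)\<in>splits r.
     ins_suffix \<tau> (endpt t i (x1 @ x2), x3) * P (fst \<tau>) (endpt t i x1, x2) * ins_prefix g \<tau> (i, x1))"
    unfolding ins_term_def pmul_eq_sum_splits by (simp add: sum_distrib_right case_prod_beta endpt_append)
  also have "\<dots> = (\<Sum>(x1, x2, x3)\<in>splits3 es.
     ins_suffix \<tau> (endpt t i (x1 @ x2), x3) * P (fst \<tau>) (endpt t i x1, x2) * ins_prefix g \<tau> (i, x1))"
    by (rule sum_splits_splits)
  finally show ?thesis .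
qed

lemma ins_term_summand:
  assumes "qpath i es" "(x1, x2, x3) \<in> splits3 es" "fst \<tau> \<in> even_nonunits"
  shows "ins_suffix \<tau> (endpt t i (x1 @ x2), x3) * P (fst \<tau>) (endpt t i x1, x2) * ins_prefix g \<tau> (i, x1)
       = (if \<tau> \<in> insertions_at i x1 x3 then ins_coeff g \<tau> * P (fst \<tau>) (endpt t i x1, x2) else 0)"
proof -
  obtain y i' al b1 e b3 ga where \<tau>: "\<tau> = (y, i', al, b1, e, b3, ga)" by (cases \<tau>) blast
  have "x1 @ x2 @ x3 = es" using assms(2) by (simp add: splits3_def)
  then have x1: "qpath i x1" and x3: "qpath (endpt t i (x1 @ x2)) x3"
    using assms(1) by (auto simp: qpath_append endpt_append)
  show ?thesis
  proof (cases "\<tau> \<in> insertions_at i x1 x3")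
    case True
    then have m: "i' = i" "al @ b1 = x1" "b3 @ ga = x3" by (auto simp: insertions_at_def \<tau>)
    show ?thesis
    proof (cases "P y (endpt t i x1, x2) = 0")
      case False
      then have "mop (endpt t i x1) x2 y \<noteq> 0" by (simp add: m0b_eq split: if_splits)
      then have "t y = endpt t i (x1 @ x2)" using mop_nonzeroD by (simp add: endpt_append)
      then show ?thesis
        using True x1 x3 by (simp add: ins_suffix_def ins_prefix_def path_monomial_def \<tau> m)
    qed (simp add: \<tau>)
  next
    case False
    then have "i' \<noteq> i \<or> al @ b1 \<noteq> x1 \<or> b3 @ ga \<noteq> x3"
      using assms(3) by (auto simp: insertions_at_def \<tau>)
    then show ?thesis
      using False by (auto simp: ins_suffix_def ins_prefix_def path_monomial_def \<tau>)
  qed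
qed

lemma sum_ins_terms:
  assumes "finite T" "\<forall>\<tau>\<in>T. fst \<tau> \<in> even_nonunits" "qpath i es"
  shows "(\<Sum>\<tau>\<in>T. ins_term g \<tau> (i, es))
       = (\<Sum>(x1, x2, x3)\<in>splits3 es. \<Sum>\<tau>\<in>T \<inter> insertions_at i x1 x3.
            ins_coeff g \<tau> * P (fst \<tau>) (endpt t i x1, x2))"
proof -
  have "(\<Sum>\<tau>\<in>T. ins_term g \<tau> (i, es)) = (\<Sum>(x1, x2, x3)\<in>splits3 es. \<Sum>\<tau>\<in>T.
     ins_suffix \<tau> (endpt t i (x1 @ x2), x3) * P (fst \<tau>) (endpt t i x1, x2) * ins_prefix g \<tau> (i, x1))"
    unfolding ins_term_eq_sum_splits3 by (subst sum.swap) (simp add: case_prod_beta)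
  also have "\<dots> = (\<Sum>(x1, x2, x3)\<in>splits3 es. \<Sum>\<tau>\<in>T.
     if \<tau> \<in> insertions_at i x1 x3 then ins_coeff g \<tau> * P (fst \<tau>) (endpt t i x1, x2) else 0)"
    by (rule sum.cong[OF refl], clarify, rule sum.cong[OF refl]) (use assms ins_term_summand in auto)
  also have "\<dots> = (\<Sum>(x1, x2, x3)\<in>splits3 es. \<Sum>\<tau>\<in>T \<inter> insertions_at i x1 x3.
            ins_coeff g \<tau> * P (fst \<tau>) (endpt t i x1, x2))"
    by (simp add: sum.inter_restrict[OF assms(1)] case_prod_beta)
  finally show ?thesis .
qed

section \<open>Energy estimates\<close>

definition low_ops :: "real \<Rightarrow> ('o \<times> 'b list) set" where
  "low_ops c = {(i, xs). chain s t i xs \<and> length (filter (\<lambda>x. x \<notin> E) xs) \<le> 1 \<and>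
                         (\<exists>z. mop i xs z \<noteq> 0 \<and> val (mop i xs z) < c)}"

lemma finite_low_ops: "finite (low_ops c)"
  using convergent unfolding energy_convergent_def low_ops_def by blast

text \<open>By energy convergence only finitely many of these operations have negative energy, so the
  choice below is well defined.\<close>

definition mop_lb :: real where
  "mop_lb = (SOME B. \<forall>j xs z. chain s t j xs \<and> length (filter (\<lambda>x. x \<notin> E) xs) \<le> 1
                       \<and> mop j xs z \<noteq> 0 \<longrightarrow> B \<le> val (mop j xs z))"

lemma mop_lb:
  assumes "chain s t j xs" "length (filter (\<lambda>x. x \<notin> E) xs) \<le> 1" "mop j xs z \<noteq> 0"
  shows "mop_lb \<le> val (mop j xs z)"
proof -
  let ?Q = "\<lambda>((j, xs), z). chain s t j xs \<and> length (filter (\<lambda>x. x \<notin> E) xs) \<le> 1 \<and> mop j xs z \<noteq> 0"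
  let ?h = "\<lambda>((j, xs), z). val (mop j xs z)"
  have "{x. ?Q x \<and> ?h x < 0} \<subseteq> low_ops 0 \<times> UNIV"
    by (auto simp: low_ops_def)
  then have "finite {x. ?Q x \<and> ?h x < 0}"
    using finite_low_ops by (meson finite_SigmaI finite_UNIV finite_subset)
  then obtain B where "\<forall>x. ?Q x \<longrightarrow> B \<le> ?h x"
    using bdd_below_if_finite_negative by blast
  then have "\<forall>j xs z. chain s t j xs \<and> length (filter (\<lambda>x. x \<notin> E) xs) \<le> 1
               \<and> mop j xs z \<noteq> 0 \<longrightarrow> B \<le> val (mop j xs z)"
    by auto
  then show ?thesis
    unfolding mop_lb_def by (rule someI2[where Q = "\<lambda>B. B \<le> val (mop j xs z)"]) (use assms in blast)
qed

lemma m0b_nonzeroD: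
  assumes "P y (j, w) \<noteq> 0"
  shows "chain s t j w" "length (filter (\<lambda>x. x \<notin> E) w) \<le> 1" "P y (j, w) = mop j w y"
proof -
  show "chain s t j w" "P y (j, w) = mop j w y" using assms by (auto simp: m0b_eq qpath_def split: if_splits)
  have "filter (\<lambda>x. x \<notin> E) w = []"
    using assms by (auto simp: m0b_eq qpath_def filter_empty_conv split: if_splits)
  then show "length (filter (\<lambda>x. x \<notin> E) w) \<le> 1" by simp
qed

lemma m0b_val_ge: "P y (j, w) \<noteq> 0 \<Longrightarrow> mop_lb \<le> val (P y (j, w))"
  using mop_lb m0b_nonzeroD by metis

lemma m0b_in_low_ops: "P y (j, w) \<noteq> 0 \<Longrightarrow> val (P y (j, w)) < c \<Longrightarrow> (j, w) \<in> low_ops c"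
  using m0b_nonzeroD[of y j w] unfolding low_ops_def by auto

lemma cpa_bdd_below: "g \<in> cpa s t E val \<Longrightarrow> \<exists>B. \<forall>p. g p \<noteq> 0 \<longrightarrow> B \<le> val (g p)"
  unfolding cpa_iff by (intro bdd_below_if_finite_negative) simp

lemma ins_coeff_val_ge:
  assumes Bg: "\<forall>p. g p \<noteq> 0 \<longrightarrow> Bg \<le> val (g p)" and "set b1 \<subseteq> E" "set b3 \<subseteq> E"
    and nz: "ins_coeff g (y, i, al, b1, e, b3, ga) \<noteq> 0"
  shows "g (i, al @ [e] @ ga) \<noteq> 0 \<and> val (g (i, al @ [e] @ ga)) + mop_lb \<le> val (ins_coeff g (y, i, al, b1, e, b3, ga))"
    and "val (ins_coeff g (y, i, al, b1, e, b3, ga)) < c \<Longrightarrow> (endpt t i al, b1 @ [y] @ b3) \<in> low_ops (c - Bg)"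
    and "Bg + mop_lb \<le> val (ins_coeff g (y, i, al, b1, e, b3, ga))"
proof -
  let ?g = "g (i, al @ [e] @ ga)" and ?m = "mop (endpt t i al) (b1 @ [y] @ b3) e"
  have prod: "ins_coeff g (y, i, al, b1, e, b3, ga) = ?g * ?m" by (simp add: ins_coeff_def)
  have "?g \<noteq> 0" "?m \<noteq> 0" using nz prod by auto
  have filter: "length (filter (\<lambda>x. x \<notin> E) (b1 @ [y] @ b3)) \<le> 1"
    using assms(2,3) by (simp add: filter_empty_conv subset_iff)
  have ch: "chain s t (endpt t i al) (b1 @ [y] @ b3)" using mop_nonzeroD[OF \<open>?m \<noteq> 0\<close>] by blast
  have "Bg \<le> val ?g" using Bg \<open>?g \<noteq> 0\<close> by blast
  moreover have "mop_lb \<le> val ?m" by (rule mop_lb[OF ch filter \<open>?m \<noteq> 0\<close>])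
  moreover have "val ?g + val ?m \<le> val (?g * ?m)" using energy nz prod by (simp add: energy_val_mult)
  ultimately show "?g \<noteq> 0 \<and> val ?g + mop_lb \<le> val (ins_coeff g (y, i, al, b1, e, b3, ga))"
    and "Bg + mop_lb \<le> val (ins_coeff g (y, i, al, b1, e, b3, ga))"
    and "val (ins_coeff g (y, i, al, b1, e, b3, ga)) < c \<Longrightarrow> (endpt t i al, b1 @ [y] @ b3) \<in> low_ops (c - Bg)"
    using \<open>?g \<noteq> 0\<close> \<open>?m \<noteq> 0\<close> ch filter unfolding prod low_ops_def by auto
qed

definition low_insertions :: "('o \<times> 'b list \<Rightarrow> 'r) \<Rightarrow> real \<Rightarrow> ('b, 'o) insertion set" where
  "low_insertions g c = {(y, i, al, b1, e, b3, ga). y \<in> even_nonunits \<and> set b1 \<subseteq> E \<and> set b3 \<subseteq> E \<and>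
     ins_coeff g (y, i, al, b1, e, b3, ga) \<noteq> 0 \<and> val (ins_coeff g (y, i, al, b1, e, b3, ga)) < c}"

text \<open>An insertion with small coefficient is pinned down by a coefficient of g of small energy
  and by an operation of small energy, so there are only finitely many.\<close>

lemma finite_low_insertions:
  assumes "g \<in> cpa s t E val"
  shows "finite (low_insertions g c)"
proof -
  obtain Bg where Bg: "\<forall>p. g p \<noteq> 0 \<longrightarrow> Bg \<le> val (g p)" using cpa_bdd_below[OF assms] by blast
  define G where "G = (\<Union>L\<in>snd ` {p. g p \<noteq> 0 \<and> val (g p) < c - mop_lb}. infixes L)"
  define M where "M = (\<Union>L\<in>snd ` low_ops (c - Bg). infixes L)"
  have "finite {p. g p \<noteq> 0 \<and> val (g p) < c - mop_lb}" using assms unfolding cpa_iff by blast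
  then have "finite G" "finite M" unfolding G_def M_def using finite_low_ops finite_infixes by auto
  moreover have "low_insertions g c \<subseteq> UNIV \<times> UNIV \<times> G \<times> M \<times> UNIV \<times> M \<times> G"
  proof (clarsimp simp: low_insertions_def)
    fix y i al b1 e b3 ga
    assume *: "set b1 \<subseteq> E" "set b3 \<subseteq> E" "ins_coeff g (y, i, al, b1, e, b3, ga) \<noteq> 0"
      "val (ins_coeff g (y, i, al, b1, e, b3, ga)) < c"
    note bounds = ins_coeff_val_ge[OF Bg *(1-3)]
    have "(i, al @ [e] @ ga) \<in> {p. g p \<noteq> 0 \<and> val (g p) < c - mop_lb}"
      using bounds(1) *(4) by auto
    note gmem = imageI[OF this, of snd]
    have "al \<in> G" "ga \<in> G" unfolding G_def
      by (rule UN_I[OF gmem], simp only: snd_conv prefix_in_infixes suffix_in_infixes)+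
    moreover have "(endpt t i al, b1 @ [y] @ b3) \<in> low_ops (c - Bg)"
      using bounds(2) *(4) .
    note mmem = imageI[OF this, of snd]
    have "b1 \<in> M" "b3 \<in> M" unfolding M_def
      by (rule UN_I[OF mmem], simp only: snd_conv prefix_in_infixes suffix_in_infixes)+
    ultimately show "al \<in> G \<and> b1 \<in> M \<and> b3 \<in> M \<and> ga \<in> G" by blast
  qed
  ultimately show ?thesis by (meson finite_SigmaI finite_UNIV finite_subset)
qed

lemma insertions_atE:
  assumes "qpath i es" "(x1, x2, x3) \<in> splits3 es" "\<tau> \<in> insertions_at i x1 x3"
  obtains y al b1 e b3 ga where "\<tau> = (y, i, al, b1, e, b3, ga)" "y \<in> even_nonunits"
    "set b1 \<subseteq> E" "set b3 \<subseteq> E" "x1 = al @ b1" "x3 = b3 @ ga" "es = al @ b1 @ x2 @ b3 @ ga"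
  using assms by (auto simp: insertions_at_def splits3_def qpath_def)

lemma commutator_summand_val_ge:
  assumes "ins_coeff g \<tau> * P (fst \<tau>) q \<noteq> 0"
  shows "val (ins_coeff g \<tau>) + mop_lb \<le> val (ins_coeff g \<tau> * P (fst \<tau>) q)"
  using assms energy_val_mult[OF energy assms] m0b_val_ge[of "fst \<tau>" "fst q" "snd q"] by force

lemma commutator_vanishes:
  assumes "g \<in> cpa s t E val" "\<not> qpath i es"
  shows "commutator g (i, es) = 0"
proof -
  have "on_qpaths (pmul t W g)" "on_qpaths (pmul t g W)"
    using assms(1) by (auto simp: cpa_iff intro!: on_qpaths_pmul on_qpaths_Wpot)
  then show ?thesis using assms(2) unfolding commutator_def on_qpaths_def by (metis diff_self)
qed

lemma commutator_in_cpa: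
  assumes g: "g \<in> cpa s t E val"
  shows "commutator g \<in> cpa s t E val"
  unfolding cpa_iff
proof (intro conjI allI)
  show "on_qpaths (commutator g)"
    using commutator_vanishes[OF g] unfolding on_qpaths_def by blast
next
  fix c
  obtain Bg where Bg: "\<forall>p. g p \<noteq> 0 \<longrightarrow> Bg \<le> val (g p)" using cpa_bdd_below[OF g] by blast
  let ?S = "(\<lambda>((y, i, al, b1, e, b3, ga), q). (i, al @ b1 @ snd q @ b3 @ ga))
              ` (low_insertions g (c - mop_lb) \<times> low_ops (c - Bg - mop_lb))"
  have "p \<in> ?S" if nz: "commutator g p \<noteq> 0" and lt: "val (commutator g p) < c" for p
  proof -
    obtain i es where p: "p = (i, es)" by (cases p)
    have path: "qpath i es" using commutator_vanishes[OF g] nz p by blast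
    let ?u = "\<lambda>x1 x2 \<tau>. ins_coeff g \<tau> * P (fst \<tau>) (endpt t i x1, x2)"
    obtain x1 x2 x3 where x: "(x1, x2, x3) \<in> splits3 es"
      and "(\<Sum>\<tau>\<in>insertions_at i x1 x3. ?u x1 x2 \<tau>) \<noteq> 0" "val (\<Sum>\<tau>\<in>insertions_at i x1 x3. ?u x1 x2 \<tau>) < c"
      using energy_val_sum_less_ex[OF energy finite_splits3] nz lt
      unfolding p commutator_eq_sum_insertions[OF path] by fastforce
    then obtain \<tau> where \<tau>: "\<tau> \<in> insertions_at i x1 x3" and u: "?u x1 x2 \<tau> \<noteq> 0" "val (?u x1 x2 \<tau>) < c"
      using energy_val_sum_less_ex[OF energy finite_insertions_at] by blast
    obtain y al b1 e b3 ga where \<tau>_eq: "\<tau> = (y, i, al, b1, e, b3, ga)" and "y \<in> even_nonunits"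
      and E: "set b1 \<subseteq> E" "set b3 \<subseteq> E" and es: "es = al @ b1 @ x2 @ b3 @ ga" and "x1 = al @ b1"
      using insertions_atE[OF path x \<tau>] .
    have coeff_nz: "ins_coeff g \<tau> \<noteq> 0" and P_nz: "P y (endpt t i x1, x2) \<noteq> 0"
      using u(1) \<tau>_eq by auto
    have sum: "val (ins_coeff g \<tau>) + val (P y (endpt t i x1, x2)) \<le> val (?u x1 x2 \<tau>)"
      using energy_val_mult[OF energy u(1)] \<tau>_eq by simp
    have "Bg + mop_lb \<le> val (ins_coeff g \<tau>)"
      using ins_coeff_val_ge(3)[OF Bg E] coeff_nz \<tau>_eq by blast
    then have "(endpt t i x1, x2) \<in> low_ops (c - Bg - mop_lb)"
      using m0b_in_low_ops[OF P_nz] sum u(2) by simp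
    moreover have "\<tau> \<in> low_insertions g (c - mop_lb)"
      using m0b_val_ge[OF P_nz] sum u(2) \<open>y \<in> even_nonunits\<close> E coeff_nz
      by (auto simp: low_insertions_def \<tau>_eq)
    ultimately show ?thesis
      unfolding p es \<tau>_eq by (intro image_eqI[of _ _ "(\<tau>, (endpt t i x1, x2))"]) (simp_all add: \<tau>_eq)
  qed
  then have "{p. commutator g p \<noteq> 0 \<and> val (commutator g p) < c} \<subseteq> ?S" by blast
  moreover have "finite ?S" using finite_low_insertions[OF g] finite_low_ops by simp
  ultimately show "finite {p. commutator g p \<noteq> 0 \<and> val (commutator g p) < c}"
    by (rule finite_subset)
qed

text \<open>The cut-off c - mop_lb makes every insertion omitted from the truncation contribute
  energy at least c.\<close>

lemma commutator_in_eclosure: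
  assumes g: "g \<in> cpa s t E val"
  shows "commutator g \<in> eclosure val (alg_ideal t (cpa s t E val) {P f | f. \<not> deg f \<and> f \<notin> range unit})"
  unfolding eclosure_def
proof (intro CollectI allI)
  fix c
  define T where "T = low_insertions g (c - mop_lb)"
  have T: "finite T" "\<forall>\<tau>\<in>T. fst \<tau> \<in> even_nonunits"
    using finite_low_insertions[OF g] by (auto simp: T_def low_insertions_def)
  define h where "h p = (\<Sum>\<tau>\<in>T. ins_term g \<tau> p)" for p
  have "h \<in> alg_ideal t (cpa s t E val) {P f | f. \<not> deg f \<and> f \<notin> range unit}"
    unfolding h_def by (rule sum_ins_terms_in_alg_ideal[OF T])
  moreover have "c \<le> val (commutator g p - h p)" if ne: "commutator g p \<noteq> h p" for p
  proof -
    obtain i es where p: "p = (i, es)" by (cases p)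
    have path: "qpath i es"
    proof (rule ccontr)
      assume "\<not> qpath i es"
      moreover have "h (i, es) = 0"
        using on_qpaths_ins_term calculation unfolding h_def on_qpaths_def by (intro sum.neutral) blast
      ultimately show False using ne p commutator_vanishes[OF g] by simp
    qed
    let ?u = "\<lambda>x1 x2 \<tau>. ins_coeff g \<tau> * P (fst \<tau>) (endpt t i x1, x2)"
    have "commutator g p - h p
        = (\<Sum>(x1, x2, x3)\<in>splits3 es. (\<Sum>\<tau>\<in>insertions_at i x1 x3. ?u x1 x2 \<tau>)
                                       - (\<Sum>\<tau>\<in>T \<inter> insertions_at i x1 x3. ?u x1 x2 \<tau>))"
      unfolding p commutator_eq_sum_insertions[OF path] h_def sum_ins_terms[OF T path]
      by (subst sum_subtractf[symmetric], rule sum.cong[OF refl], simp only: split_def)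
    also have "\<dots> = (\<Sum>(x1, x2, x3)\<in>splits3 es. \<Sum>\<tau>\<in>insertions_at i x1 x3 - T. ?u x1 x2 \<tau>)"
    proof (intro sum.cong refl, clarify)
      fix x1 x2 x3
      have "insertions_at i x1 x3 - T \<inter> insertions_at i x1 x3 = insertions_at i x1 x3 - T" by blast
      then show "(\<Sum>\<tau>\<in>insertions_at i x1 x3. ?u x1 x2 \<tau>) - (\<Sum>\<tau>\<in>T \<inter> insertions_at i x1 x3. ?u x1 x2 \<tau>)
               = (\<Sum>\<tau>\<in>insertions_at i x1 x3 - T. ?u x1 x2 \<tau>)"
        using sum_diff[OF finite_insertions_at, of "T \<inter> insertions_at i x1 x3" i x1 x3 "?u x1 x2"] by simp
    qed
    finally have diff_eq: "commutator g p - h p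
        = (\<Sum>(x1, x2, x3)\<in>splits3 es. \<Sum>\<tau>\<in>insertions_at i x1 x3 - T. ?u x1 x2 \<tau>)" .
    have "\<forall>x\<in>splits3 es. (case x of (x1, x2, x3) \<Rightarrow> \<Sum>\<tau>\<in>insertions_at i x1 x3 - T. ?u x1 x2 \<tau>) \<noteq> 0
            \<longrightarrow> c \<le> val (case x of (x1, x2, x3) \<Rightarrow> \<Sum>\<tau>\<in>insertions_at i x1 x3 - T. ?u x1 x2 \<tau>)"
    proof (clarify)
      fix x1 x2 x3 assume x: "(x1, x2, x3) \<in> splits3 es"
        and nz: "(\<Sum>\<tau>\<in>insertions_at i x1 x3 - T. ?u x1 x2 \<tau>) \<noteq> 0"
      have "c \<le> val (?u x1 x2 \<tau>)" if \<tau>: "\<tau> \<in> insertions_at i x1 x3 - T" and u: "?u x1 x2 \<tau> \<noteq> 0" for \<tau>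
      proof -
        from \<tau> have "\<tau> \<in> insertions_at i x1 x3" by blast
        from insertions_atE[OF path x this] obtain y al b1 e b3 ga
          where \<tau>_eq: "\<tau> = (y, i, al, b1, e, b3, ga)" and
          "y \<in> even_nonunits" "set b1 \<subseteq> E" "set b3 \<subseteq> E" .
        moreover have "ins_coeff g \<tau> \<noteq> 0" using u by auto
        moreover have "\<tau> \<notin> low_insertions g (c - mop_lb)" using \<tau> by (simp add: T_def)
        ultimately have "c - mop_lb \<le> val (ins_coeff g \<tau>)"
          unfolding low_insertions_def \<tau>_eq by (simp add: not_less)
        then show ?thesis using commutator_summand_val_ge[OF u] by linarith
      qed
      then show "c \<le> val (\<Sum>\<tau>\<in>insertions_at i x1 x3 - T. ?u x1 x2 \<tau>)"
        using energy_val_sum_ge[OF energy finite_Diff[OF finite_insertions_at] _ nz] by blast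
    qed
    moreover have "commutator g p - h p \<noteq> 0" using ne by simp
    ultimately show ?thesis
      unfolding diff_eq by (rule energy_val_sum_ge[OF energy finite_splits3])
  qed
  ultimately show "\<exists>h\<in>alg_ideal t (cpa s t E val) {P f | f. \<not> deg f \<and> f \<notin> range unit}.
                     \<forall>p. commutator g p \<noteq> h p \<longrightarrow> c \<le> val (commutator g p - h p)"
    by blast
qed

end

theorem theorem6p6:
  fixes src tgt :: "'b::finite \<Rightarrow> 'o::finite"
    and deg_odd :: "'b \<Rightarrow> bool"
    and unit :: "'o \<Rightarrow> 'b"
    and mop :: "'o \<Rightarrow> 'b list \<Rightarrow> 'b \<Rightarrow> 'r::comm_ring_1"
    and val :: "'r \<Rightarrow> real"
    and E :: "'b set"
  assumes "energy_val val"
    and "unital_Ainf src tgt deg_odd unit mop"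
    and "energy_convergent src tgt E val mop"
    and "\<forall>e\<in>E. deg_odd e"
  shows "\<forall>g\<in>cpa src tgt E val.
           (\<lambda>p. pmul tgt (Wpot src tgt E unit mop) g p - pmul tgt g (Wpot src tgt E unit mop) p)
             \<in> Rideal src tgt deg_odd unit E val mop"
proof
  interpret Ainf_quiver src tgt deg_odd unit mop val E
    using assms by unfold_locales
  fix g assume "g \<in> cpa src tgt E val"
  then have "commutator g \<in> Rideal src tgt deg_odd unit E val mop"
    unfolding Rideal_def using commutator_in_cpa commutator_in_eclosure by blast
  then show "(\<lambda>p. pmul tgt W g p - pmul tgt g W p) \<in> Rideal src tgt deg_odd unit E val mop"
    by (simp add: commutator_def[abs_def])
qed

end
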